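(* Let $\gamma_1,\gamma_2>0$ and consider the birth-death chain RDS $(\theta,\varphi)$ on $\mathbb{N}_0$ described in the context. Let $W_0=\{0,2,4,\dots\}$ and $W_1=\{1,3,5,\dots\}$. Then $(\theta,\varphi)$ is partially synchronizing with partition $\{W_0,W_1\}$: for each $i\in\{0,1\}$ and all $x,y\in W_i$, for $\mathbb{P}$-a.e. $q\in\mathcal{Q}_+$ there exists $n_0=n_0(x,y,q)\in\mathbb{N}_0$ with $\varphi^{n_0}_q(x)=\varphi^{n_0}_q(y)$.
   Context: Noise space: $\mathcal{Q}_+=\{q=(q_n)_{n\in\mathbb{N}_0}: q_n\in[0,1]\}$ with the product Borel $\sigma$-algebra and the product measure $\mathbb{P}=\lambda^{\mathbb{N}_0}$, $\lambda$ Lebesgue measure on $[0,1]$; shift $\theta(q_0,q_1,\dots)=(q_1,q_2,\dots)$. For $q\in\mathcal{Q}_+$ define $f_q:\mathbb{N}_0\to\mathbb{N}_0$ by $f_q(x)=x+1$ if $q_0<\frac{\gamma_1}{\gamma_1+\gamma_2x}$ and $f_q(x)=x-1$ otherwise. The cocycle is $\varphi^0_q(x)=x$ and $\varphi^n_q(x)=f_{\theta^{n-1}q}\circ\cdots\circ f_q(x)$ for $n\geq1$. An RDS is called synchronizing in $S$ if for every $x,y\in S$ and $\mathbb{P}$-a.e. $q$ there is $n_0$ with $\varphi^{n_0}_q(x)=\varphi^{n_0}_q(y)$; it is partially synchronizing with partition $\{W_0,\dots,W_{p-1}\}$ of the state space if it is synchronizing in each $W_i$. *)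

theory Defs
  imports "HOL-Probability.Probability"
begin

definition noise_measure :: "(nat \<Rightarrow> real) measure" where
  "noise_measure = Pi\<^sub>M UNIV (\<lambda>_. restrict_space lborel {0..1::real})"

definition shift :: "(nat \<Rightarrow> real) \<Rightarrow> (nat \<Rightarrow> real)" where
  "shift q = (\<lambda>n. q (Suc n))"

text \<open>One step of the birth-death chain (x - 1 is truncated subtraction on nat;
  it only matters at x = 0 on the null event q_0 = 1).\<close>
definition bd_step :: "real \<Rightarrow> real \<Rightarrow> (nat \<Rightarrow> real) \<Rightarrow> nat \<Rightarrow> nat" where
  "bd_step g1 g2 q x = (if q 0 < g1 / (g1 + g2 * real x) then x + 1 else x - 1)"

fun bd_cocycle :: "real \<Rightarrow> real \<Rightarrow> nat \<Rightarrow> (nat \<Rightarrow> real) \<Rightarrow> nat \<Rightarrow> nat" where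
  "bd_cocycle g1 g2 0 q x = x"
| "bd_cocycle g1 g2 (Suc n) q x = bd_step g1 g2 ((shift ^^ n) q) (bd_cocycle g1 g2 n q x)"

definition synchronizing_in ::
  "'q measure \<Rightarrow> (nat \<Rightarrow> 'q \<Rightarrow> 's \<Rightarrow> 's) \<Rightarrow> 's set \<Rightarrow> bool" where
  "synchronizing_in M \<phi> S \<longleftrightarrow>
     (\<forall>x\<in>S. \<forall>y\<in>S. AE q in M. \<exists>n0. \<phi> n0 q x = \<phi> n0 q y)"

definition partially_synchronizing ::
  "'q measure \<Rightarrow> (nat \<Rightarrow> 'q \<Rightarrow> 's \<Rightarrow> 's) \<Rightarrow> 's set set \<Rightarrow> bool" where
  "partially_synchronizing M \<phi> P \<longleftrightarrow>
     \<Union>P = UNIV \<and> {} \<notin> P \<and> (\<forall>A\<in>P. \<forall>B\<in>P. A \<noteq> B \<longrightarrow> A \<inter> B = {}) \<and>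
     (\<forall>W\<in>P. synchronizing_in M \<phi> W)"

end

(*
  Two copies of the chain driven by the same noise stay ordered and keep the parity of
  their sum: every step changes the parity of the state (at 0 the up-probability is 1),
  two distinct states of equal parity differ by at least 2, and the up-probability
  decreases with the state.  So it suffices that the upper copy almost surely enters
  {0, 1}: at that moment the lower copy, being no larger and of the same parity,
  coincides with it.  Entering {0, 1} follows from a Foster-Lyapunov argument: a
  nonnegative V whose expectation drops by at least 1 per step taken in {2, 3, ...}
  bounds the expected number of such steps by V of the starting state.
*)
theory Submission
  imports Defs
begin

(* Recursion on the first noise variable, so that first-step analysis applies directly;
   noise_walk_Suc' is the forward recursion x_(n+1) = f (q n) x_n. *)
fun noise_walk :: "('a \<Rightarrow> 's \<Rightarrow> 's) \<Rightarrow> nat \<Rightarrow> (nat \<Rightarrow> 'a) \<Rightarrow> 's \<Rightarrow> 's" where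
  "noise_walk f 0 q x = x"
| "noise_walk f (Suc n) q x = noise_walk f n (q \<circ> Suc) (f (q 0) x)"

lemma noise_walk_Suc': "noise_walk f (Suc n) q x = f (q n) (noise_walk f n q x)"
proof (induction n arbitrary: q x)
  case (Suc n)
  have "noise_walk f (Suc (Suc n)) q x = noise_walk f (Suc n) (q \<circ> Suc) (f (q 0) x)"
    by (rule noise_walk.simps(2))
  also have "\<dots> = f ((q \<circ> Suc) n) (noise_walk f n (q \<circ> Suc) (f (q 0) x))"
    by (rule Suc.IH)
  also have "\<dots> = f (q (Suc n)) (noise_walk f (Suc n) q x)"
    by simp
  finally show ?case .
qed simp

lemma noise_walk_preserves:
  assumes "\<And>t a b. t \<in> A \<Longrightarrow> R a b \<Longrightarrow> R (f t a) (f t b)"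
    and "\<forall>j. q j \<in> A" and "R x y"
  shows "R (noise_walk f n q x) (noise_walk f n q y)"
  using assms(2,3) by (induction n arbitrary: q x y) (simp_all add: assms(1))

context sequence_space
begin

lemma emeasure_Collect_case_nat:
  assumes [measurable]: "Measurable.pred S P"
  shows "emeasure S {q\<in>space S. P q} = (\<integral>\<^sup>+t. emeasure S {q\<in>space S. P (case_nat t q)} \<partial>M)"
proof -
  have case_nat_measurable[measurable]: "(\<lambda>(t, q). case_nat t q) \<in> M \<Otimes>\<^sub>M S \<rightarrow>\<^sub>M S"
    by (simp add: split_beta')
  have "emeasure S {q\<in>space S. P q} =
      emeasure (distr (M \<Otimes>\<^sub>M S) S (\<lambda>(t, q). case_nat t q)) {q\<in>space S. P q}"
    by (simp add: PiM_iter)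
  also have "\<dots> = emeasure (M \<Otimes>\<^sub>M S) {x\<in>space (M \<Otimes>\<^sub>M S). P (case_nat (fst x) (snd x))}"
    using measurable_space[OF case_nat_measurable]
    by (subst emeasure_distr) (auto intro!: arg_cong2[where f=emeasure])
  also have "\<dots> = (\<integral>\<^sup>+t. emeasure S {q\<in>space S. P (case_nat t q)} \<partial>M)"
    by (subst P.emeasure_pair_measure_alt)
      (auto intro!: nn_integral_cong arg_cong2[where f=emeasure] simp: space_pair_measure)
  finally show ?thesis .
qed

lemma measurable_noise_walk[measurable]:
  fixes f :: "'a \<Rightarrow> 's::countable \<Rightarrow> 's"
  assumes f: "\<And>x. (\<lambda>t. f t x) \<in> M \<rightarrow>\<^sub>M count_space UNIV"
  shows "(\<lambda>q. noise_walk f n q x) \<in> S \<rightarrow>\<^sub>M count_space UNIV"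
proof (induction n)
  case (Suc n)
  have "(\<lambda>q. f (q n) i) \<in> S \<rightarrow>\<^sub>M count_space UNIV" for i
    using measurable_compose[OF measurable_component_singleton[of n UNIV] f] by simp
  then show ?case
    unfolding noise_walk_Suc'
    by (rule measurable_compose_countable'[where f="\<lambda>i q. f (q n) i", OF _ Suc]) simp
qed simp

definition walk_stays :: "('a \<Rightarrow> 's \<Rightarrow> 's) \<Rightarrow> 's set \<Rightarrow> nat \<Rightarrow> 's \<Rightarrow> (nat \<Rightarrow> 'a) set" where
  "walk_stays f W n x = {q\<in>space S. \<forall>m\<le>n. noise_walk f m q x \<in> W}"

lemma walk_stays_sets:
  fixes f :: "'a \<Rightarrow> 's::countable \<Rightarrow> 's"
  assumes "\<And>x. (\<lambda>t. f t x) \<in> M \<rightarrow>\<^sub>M count_space UNIV"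
  shows "walk_stays f W n x \<in> sets S"
  unfolding walk_stays_def using assms by measurable

lemma emeasure_walk_stays_Suc:
  fixes f :: "'a \<Rightarrow> 's::countable \<Rightarrow> 's"
  assumes f: "\<And>x. (\<lambda>t. f t x) \<in> M \<rightarrow>\<^sub>M count_space UNIV" and "x \<in> W"
  shows "emeasure S (walk_stays f W (Suc n) x) = (\<integral>\<^sup>+t. emeasure S (walk_stays f W n (f t x)) \<partial>M)"
proof -
  have walk_cons: "noise_walk f (Suc m) (case_nat t q) y = noise_walk f m q (f t y)" for m t q y
    by (simp add: comp_def)
  have stays_cons: "(\<forall>m\<le>Suc n. noise_walk f m (case_nat t q) x \<in> W) \<longleftrightarrow>
      (\<forall>m\<le>n. noise_walk f m q (f t x) \<in> W)" for t q
    using \<open>x \<in> W\<close> unfolding less_Suc_eq_le[symmetric] All_less_Suc2 walk_cons by simp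
  have "Measurable.pred S (\<lambda>q. \<forall>m\<le>Suc n. noise_walk f m q x \<in> W)"
    using f by measurable
  then have "emeasure S {q\<in>space S. \<forall>m\<le>Suc n. noise_walk f m q x \<in> W} =
      (\<integral>\<^sup>+t. emeasure S {q\<in>space S. \<forall>m\<le>Suc n. noise_walk f m (case_nat t q) x \<in> W} \<partial>M)"
    by (rule emeasure_Collect_case_nat)
  then show ?thesis
    unfolding walk_stays_def stays_cons .
qed

(* The sum is the expected number of the first n times at which the walk has not yet left W;
   each of them costs V at least 1 in expectation. *)
lemma sum_emeasure_walk_stays_le:
  fixes f :: "'a \<Rightarrow> 's::countable \<Rightarrow> 's" and V :: "'s \<Rightarrow> ennreal"
  assumes f: "\<And>x. (\<lambda>t. f t x) \<in> M \<rightarrow>\<^sub>M count_space UNIV"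
    and drift: "\<And>z. z \<in> W \<Longrightarrow> (\<integral>\<^sup>+t. V (f t z) \<partial>M) + 1 \<le> V z"
  shows "(\<Sum>k<n. emeasure S (walk_stays f W k x)) \<le> V x"
proof (induction n arbitrary: x)
  case (Suc n)
  show ?case
  proof (cases "x \<in> W")
    case True
    have measurable_stays_after_step:
      "(\<lambda>t. emeasure S (walk_stays f W k (f t x))) \<in> borel_measurable M" for k
      using measurable_compose[OF f, of "\<lambda>z. emeasure S (walk_stays f W k z)" borel] by simp
    have "walk_stays f W 0 x = space S"
      using True by (simp add: walk_stays_def)
    then have "(\<Sum>k<Suc n. emeasure S (walk_stays f W k x))
        = 1 + (\<Sum>k<n. \<integral>\<^sup>+t. emeasure S (walk_stays f W k (f t x)) \<partial>M)"
      unfolding sum.lessThan_Suc_shift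
      by (simp add: emeasure_walk_stays_Suc[OF f True] emeasure_space_1 del: sum.lessThan_Suc)
    also have "\<dots> = 1 + (\<integral>\<^sup>+t. (\<Sum>k<n. emeasure S (walk_stays f W k (f t x))) \<partial>M)"
    proof -
      have "(\<integral>\<^sup>+t. (\<Sum>k<n. emeasure S (walk_stays f W k (f t x))) \<partial>M)
          = (\<Sum>k<n. \<integral>\<^sup>+t. emeasure S (walk_stays f W k (f t x)) \<partial>M)"
        by (rule nn_integral_sum) (rule measurable_stays_after_step)
      then show ?thesis
        by (simp only:)
    qed
    also have "\<dots> \<le> 1 + (\<integral>\<^sup>+t. V (f t x) \<partial>M)"
      by (intro add_left_mono nn_integral_mono Suc.IH)
    also have "\<dots> \<le> V x"
      using drift[OF True] by (simp add: add.commute)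
    finally show ?thesis .
  next
    case False
    then have "noise_walk f 0 q x \<notin> W" for q
      by simp
    then have "walk_stays f W k x = {}" for k
      unfolding walk_stays_def using le0[of k] by blast
    then show ?thesis
      by simp
  qed
qed simp

lemma AE_noise_walk_leaves:
  fixes f :: "'a \<Rightarrow> 's::countable \<Rightarrow> 's" and V :: "'s \<Rightarrow> ennreal"
  assumes f: "\<And>x. (\<lambda>t. f t x) \<in> M \<rightarrow>\<^sub>M count_space UNIV"
    and drift: "\<And>z. z \<in> W \<Longrightarrow> (\<integral>\<^sup>+t. V (f t z) \<partial>M) + 1 \<le> V z"
    and finite: "V x < \<infinity>"
  shows "AE q in S. \<exists>n. noise_walk f n q x \<notin> W"
proof -
  define stays_forever where "stays_forever = {q\<in>space S. \<forall>m. noise_walk f m q x \<in> W}"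
  have stays_forever_sets: "stays_forever \<in> sets S"
    unfolding stays_forever_def using f by measurable
  obtain v where v: "V x = ennreal v" "0 \<le> v"
    using finite by (auto simp: less_top_ennreal)
  define p where "p = measure S stays_forever"
  have p_nonneg: "0 \<le> p"
    by (simp add: p_def)
  have sojourn_bound: "real n * p \<le> v" for n
  proof -
    have "ennreal (real n * p) = (\<Sum>k<n. emeasure S stays_forever)"
      using p_nonneg by (simp add: p_def emeasure_eq_measure ennreal_mult ennreal_of_nat_eq_real_of_nat)
    also have "\<dots> \<le> (\<Sum>k<n. emeasure S (walk_stays f W k x))"
      by (intro sum_mono emeasure_mono walk_stays_sets f) (auto simp: stays_forever_def walk_stays_def)
    also have "\<dots> \<le> ennreal v"
      unfolding v(1)[symmetric] by (rule sum_emeasure_walk_stays_le[OF f drift])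
    finally show ?thesis
      using v by (simp add: ennreal_le_iff)
  qed
  have "p = 0"
  proof (rule ccontr)
    assume "p \<noteq> 0"
    with p_nonneg obtain n where "v < real n * p"
      using ex_less_of_nat_mult[of p v] by auto
    with sojourn_bound[of n] show False
      by simp
  qed
  then have "stays_forever \<in> null_sets S"
    using stays_forever_sets by (simp add: p_def emeasure_eq_measure null_sets_def)
  then show ?thesis
    by (rule AE_I') (auto simp: stays_forever_def)
qed

end

definition lyapunov_sum :: "real \<Rightarrow> nat \<Rightarrow> nat \<Rightarrow> real" where
  "lyapunov_sum B N z = (\<Sum>k\<in>{2..z}. 2 * B ^ (N - k))"

lemma lyapunov_sum_nonneg: "0 \<le> B \<Longrightarrow> 0 \<le> lyapunov_sum B N z"
  unfolding lyapunov_sum_def by (intro sum_nonneg) simp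

lemma lyapunov_sum_Suc:
  "2 \<le> Suc z \<Longrightarrow> lyapunov_sum B N (Suc z) = lyapunov_sum B N z + 2 * B ^ (N - Suc z)"
  unfolding lyapunov_sum_def by (simp add: sum.cl_ivl_Suc)

lemma lyapunov_sum_drift:
  fixes p B :: real
  assumes "0 \<le> p" "p \<le> 1" "2 \<le> (1 - p) * B" and "2 \<le> z" and "N \<le> z \<Longrightarrow> p \<le> 1/4"
  shows "p * lyapunov_sum B N (z + 1) + (1 - p) * lyapunov_sum B N (z - 1) + 1 \<le> lyapunov_sum B N z"
proof -
  define up where "up = 2 * B ^ (N - (z + 1))"
  define down where "down = 2 * B ^ (N - z)"
  have "(1 - p) * B \<le> max 0 B"
    using assms(1,2) by (cases "0 \<le> B") (auto simp: mult_left_le_one_le mult_nonneg_nonpos)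
  then have "1 \<le> B"
    using assms(3) by linarith
  then have "2 \<le> up"
    by (simp add: up_def one_le_power)
  have "lyapunov_sum B N (z + 1) = lyapunov_sum B N z + up"
    using lyapunov_sum_Suc[of z B N] \<open>2 \<le> z\<close> by (simp add: up_def)
  moreover have "lyapunov_sum B N z = lyapunov_sum B N (z - 1) + down"
    using lyapunov_sum_Suc[of "z - 1" B N] \<open>2 \<le> z\<close> by (simp add: down_def)
  moreover have "p * up - (1 - p) * down + 1 \<le> 0"
  proof (cases "N \<le> z")
    case True
    then have "up = 2" "down = 2"
      by (simp_all add: up_def down_def)
    with assms(5)[OF True] show ?thesis by simp
  next
    case False
    then have "N - z = Suc (N - (z + 1))"
      by simp
    then have "down = B * up"
      by (simp add: up_def down_def)
    then have "2 * up \<le> (1 - p) * down"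
      using assms(3) \<open>2 \<le> up\<close> by (simp add: mult_right_mono mult.assoc)
    moreover have "p * up \<le> up"
      using assms(2) \<open>2 \<le> up\<close> by (simp add: mult_le_cancel_right1)
    ultimately show ?thesis
      using \<open>2 \<le> up\<close> by linarith
  qed
  ultimately show ?thesis
    by (simp add: algebra_simps)
qed

definition bd_move :: "real \<Rightarrow> real \<Rightarrow> real \<Rightarrow> nat \<Rightarrow> nat" where
  "bd_move g1 g2 t x = (if t < g1 / (g1 + g2 * real x) then x + 1 else x - 1)"

lemma funpow_shift_apply: "(shift ^^ n) q k = q (n + k)"
  by (induction n arbitrary: k) (simp_all add: shift_def)

lemma bd_cocycle_eq_noise_walk: "bd_cocycle g1 g2 n q x = noise_walk (bd_move g1 g2) n q x"
  by (induction n)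
    (simp_all add: noise_walk_Suc' bd_step_def bd_move_def funpow_shift_apply del: noise_walk.simps(2))

lemma bd_threshold_antimono:
  assumes "0 < g1" "0 \<le> g2" "a \<le> b"
  shows "g1 / (g1 + g2 * real b) \<le> g1 / (g1 + g2 * real a)"
  using assms by (intro frac_le) (auto intro: add_pos_nonneg mult_left_mono)

(* At x = 0 the threshold is 1, so t < 1 forces a step up; for t = 1 the truncated
   subtraction would keep the chain at 0. *)
lemma odd_bd_move_add:
  assumes "0 < g1" "t < 1"
  shows "odd (bd_move g1 g2 t x + x)"
  using assms by (cases x) (auto simp: bd_move_def)

lemma bd_move_coupling:
  assumes g: "0 < g1" "0 < g2" and "t < 1" "a \<le> b" "even (a + b)"
  shows "bd_move g1 g2 t a \<le> bd_move g1 g2 t b \<and> even (bd_move g1 g2 t a + bd_move g1 g2 t b)"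
proof
  show "even (bd_move g1 g2 t a + bd_move g1 g2 t b)"
    using odd_bd_move_add[OF g(1) \<open>t < 1\<close>, of g2 a] odd_bd_move_add[OF g(1) \<open>t < 1\<close>, of g2 b]
      \<open>even (a + b)\<close> by presburger
  show "bd_move g1 g2 t a \<le> bd_move g1 g2 t b"
  proof (cases "a = b")
    case False
    with \<open>a \<le> b\<close> \<open>even (a + b)\<close> have "a + 2 \<le> b"
      by presburger
    then show ?thesis
      using bd_threshold_antimono[of g1 g2 a b] g by (auto simp: bd_move_def)
  qed simp
qed

abbreviation lborel_01 :: "real measure" where
  "lborel_01 \<equiv> restrict_space lborel {0..1}"

lemma prob_space_lborel_01: "prob_space lborel_01"
  by (auto intro!: prob_spaceI simp: emeasure_restrict_space space_restrict_space)

interpretation unit_noise: sequence_space lborel_01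
  unfolding sequence_space_def product_prob_space_def product_prob_space_axioms_def
    product_sigma_finite_def
  using prob_space_lborel_01 by (auto simp: prob_space_imp_sigma_finite)

lemma noise_measure_eq: "noise_measure = unit_noise.S"
  by (simp add: noise_measure_def)

lemma AE_noise_less_1: "AE q in unit_noise.S. \<forall>j. q j < 1"
proof -
  have "AE t in lborel_01. t < 1"
    using AE_lborel_singleton[of 1] by (subst AE_restrict_space_iff) (auto elim!: eventually_mono)
  then show ?thesis
    by (auto intro: unit_noise.AE_component simp: AE_all_countable)
qed

lemma measurable_bd_move: "(\<lambda>t. bd_move g1 g2 t x) \<in> lborel_01 \<rightarrow>\<^sub>M count_space UNIV"
proof -
  have [measurable]: "(\<lambda>t. t) \<in> borel_measurable lborel_01"
    by (rule measurable_restrict_space1) simp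
  show ?thesis
    unfolding bd_move_def by measurable
qed

lemma nn_integral_lborel_01_threshold:
  fixes a b :: ennreal
  assumes "0 \<le> c" "c \<le> 1"
  shows "(\<integral>\<^sup>+t. (if t < c then a else b) \<partial>lborel_01) = ennreal c * a + ennreal (1 - c) * b"
proof -
  have sets: "{0..<c} \<in> sets lborel_01" "{c..1} \<in> sets lborel_01"
    using assms by (auto simp: sets_restrict_space_iff)
  have "(\<integral>\<^sup>+t. (if t < c then a else b) \<partial>lborel_01) =
      (\<integral>\<^sup>+t. a * indicator {0..<c} t + b * indicator {c..1} t \<partial>lborel_01)"
    by (rule nn_integral_cong) (auto simp: indicator_def space_restrict_space)
  also have "\<dots> = a * emeasure lborel_01 {0..<c} + b * emeasure lborel_01 {c..1}"
    using sets by (simp add: nn_integral_add nn_integral_cmult_indicator)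
  also have "\<dots> = ennreal c * a + ennreal (1 - c) * b"
  proof -
    have "emeasure lborel_01 {0..<c} = ennreal c"
      using assms by (subst emeasure_restrict_space) auto
    moreover have "emeasure lborel_01 {c..1} = ennreal (1 - c)"
      using assms by (subst emeasure_restrict_space) auto
    ultimately show ?thesis
      by (simp add: mult.commute)
  qed
  finally show ?thesis .
qed

(* From N = ceil (3 g1 / g2) on the up-probability is at most 1/4 and constant increments
   give drift -1; below N the increments 2 B^(N - k) grow towards smaller states by the factor
   B = 2 / (1 - p_2), where p_2 is the largest up-probability on {2, 3, ...}. *)
definition bd_lyapunov :: "real \<Rightarrow> real \<Rightarrow> nat \<Rightarrow> real" where
  "bd_lyapunov g1 g2 = lyapunov_sum (2 / (1 - g1 / (g1 + g2 * 2))) (nat \<lceil>3 * g1 / g2\<rceil>)"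

lemma bd_lyapunov_nonneg: "0 < g1 \<Longrightarrow> 0 < g2 \<Longrightarrow> 0 \<le> bd_lyapunov g1 g2 z"
  unfolding bd_lyapunov_def by (intro lyapunov_sum_nonneg) (simp add: add_pos_pos)

lemma bd_lyapunov_mean_drift:
  assumes g: "0 < g1" "0 < g2" and "2 \<le> z"
  defines "p \<equiv> g1 / (g1 + g2 * real z)"
  shows "p * bd_lyapunov g1 g2 (z + 1) + (1 - p) * bd_lyapunov g1 g2 (z - 1) + 1
    \<le> bd_lyapunov g1 g2 z"
proof -
  define r where "r = g1 / (g1 + g2 * 2)"
  define B where "B = 2 / (1 - r)"
  define N where "N = nat \<lceil>3 * g1 / g2\<rceil>"
  have "0 < g1 + g2 * real z"
    using g by (simp add: add_pos_nonneg)
  then have p: "0 \<le> p" "p \<le> 1"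
    using g by (simp_all add: p_def divide_le_eq_1)
  have "p \<le> r" "r < 1"
    using bd_threshold_antimono[of g1 g2 2 z] g \<open>2 \<le> z\<close> by (auto simp: p_def r_def)
  then have "2 \<le> (1 - p) * B"
    unfolding B_def by (simp add: field_simps)
  moreover have "p \<le> 1/4" if "N \<le> z"
  proof -
    have "3 * g1 / g2 \<le> real z"
      using that unfolding N_def by linarith
    then have "4 * g1 \<le> g1 + g2 * real z"
      using g by (simp add: field_simps)
    then show ?thesis
      using g by (simp add: p_def field_simps add_pos_nonneg)
  qed
  ultimately show ?thesis
    using lyapunov_sum_drift[OF p _ \<open>2 \<le> z\<close>, of B N]
    by (simp add: bd_lyapunov_def B_def r_def N_def)
qed

lemma bd_lyapunov_drift:
  assumes g: "0 < g1" "0 < g2" and "2 \<le> z"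
  shows "(\<integral>\<^sup>+t. ennreal (bd_lyapunov g1 g2 (bd_move g1 g2 t z)) \<partial>lborel_01) + 1
    \<le> ennreal (bd_lyapunov g1 g2 z)"
proof -
  define p where "p = g1 / (g1 + g2 * real z)"
  let ?V = "bd_lyapunov g1 g2"
  have p: "0 \<le> p" "p \<le> 1"
    using g by (simp_all add: p_def divide_le_eq_1 add_pos_nonneg)
  have "(\<integral>\<^sup>+t. ennreal (?V (bd_move g1 g2 t z)) \<partial>lborel_01)
      = ennreal p * ennreal (?V (z + 1)) + ennreal (1 - p) * ennreal (?V (z - 1))"
    unfolding bd_move_def p_def[symmetric] if_distrib[of "\<lambda>y. ennreal (?V y)"]
    using p by (rule nn_integral_lborel_01_threshold)
  also have "\<dots> + 1 = ennreal (p * ?V (z + 1) + (1 - p) * ?V (z - 1) + 1)"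
    using p bd_lyapunov_nonneg[OF g] by (simp add: ennreal_mult ennreal_plus)
  also have "\<dots> \<le> ennreal (?V z)"
    using bd_lyapunov_mean_drift[OF assms] by (intro ennreal_leI) (simp add: p_def)
  finally show ?thesis .
qed

lemma AE_bd_walk_below_2:
  assumes "0 < g1" "0 < g2"
  shows "AE q in unit_noise.S. \<exists>n. noise_walk (bd_move g1 g2) n q y < 2"
proof -
  have "AE q in unit_noise.S. \<exists>n. noise_walk (bd_move g1 g2) n q y \<notin> {2..}"
  proof (rule unit_noise.AE_noise_walk_leaves[where V="\<lambda>z. ennreal (bd_lyapunov g1 g2 z)"])
    show "(\<lambda>t. bd_move g1 g2 t x) \<in> lborel_01 \<rightarrow>\<^sub>M count_space UNIV" for x
      by (rule measurable_bd_move)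
    show "(\<integral>\<^sup>+t. ennreal (bd_lyapunov g1 g2 (bd_move g1 g2 t z)) \<partial>lborel_01) + 1
        \<le> ennreal (bd_lyapunov g1 g2 z)" if "z \<in> {2..}" for z
      using that by (simp add: bd_lyapunov_drift[OF assms])
  qed simp
  then show ?thesis
    by (simp add: not_le)
qed

lemma bd_cocycle_synchronizes:
  assumes g: "0 < g1" "0 < g2" and "x \<le> y" "even (x + y)"
  shows "AE q in noise_measure. \<exists>n. bd_cocycle g1 g2 n q x = bd_cocycle g1 g2 n q y"
  using AE_bd_walk_below_2[OF g, of y] AE_noise_less_1 unfolding noise_measure_eq
proof eventually_elim
  case (elim q)
  then obtain n where below_2: "noise_walk (bd_move g1 g2) n q y < 2"
    by blast
  let ?a = "noise_walk (bd_move g1 g2) n q x" and ?b = "noise_walk (bd_move g1 g2) n q y"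
  have "?a \<le> ?b \<and> even (?a + ?b)"
  proof (rule noise_walk_preserves[where A="{..<1}" and R="\<lambda>a b. a \<le> b \<and> even (a + b)"])
    show "\<forall>j. q j \<in> {..<1}"
      using elim by simp
    show "bd_move g1 g2 t a \<le> bd_move g1 g2 t b \<and> even (bd_move g1 g2 t a + bd_move g1 g2 t b)"
      if "t \<in> {..<1}" "a \<le> b \<and> even (a + b)" for t a b
      using that bd_move_coupling[OF g, of t a b] by simp
  qed (use \<open>x \<le> y\<close> \<open>even (x + y)\<close> in simp)
  moreover have "a = b" if "a \<le> b" "b < 2" "even (a + b)" for a b :: nat
    using that by presburger
  ultimately have "?a = ?b"
    using below_2 by blast
  then show ?case
    by (auto simp: bd_cocycle_eq_noise_walk)
qed

lemma bd_cocycle_synchronizing_in_parity_class: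
  assumes g: "0 < g1" "0 < g2" and W: "\<And>x y. x \<in> W \<Longrightarrow> y \<in> W \<Longrightarrow> even (x + y)"
  shows "synchronizing_in noise_measure (bd_cocycle g1 g2) W"
  unfolding synchronizing_in_def
proof (intro ballI)
  fix x y assume "x \<in> W" "y \<in> W"
  then have "even (x + y)"
    by (rule W)
  show "AE q in noise_measure. \<exists>n0. bd_cocycle g1 g2 n0 q x = bd_cocycle g1 g2 n0 q y"
  proof (cases "x \<le> y")
    case True
    then show ?thesis
      using \<open>even (x + y)\<close> by (rule bd_cocycle_synchronizes[OF g])
  next
    case False
    with \<open>even (x + y)\<close> have "AE q in noise_measure. \<exists>n. bd_cocycle g1 g2 n q y = bd_cocycle g1 g2 n q x"
      by (intro bd_cocycle_synchronizes[OF g]) (simp_all add: add.commute)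
    then show ?thesis
      by (simp add: eq_commute)
  qed
qed

theorem corollary3p4:
  fixes g1 g2 :: real
  assumes "g1 > 0" and "g2 > 0"
  shows "partially_synchronizing noise_measure (bd_cocycle g1 g2)
           {{x. even x}, {x. odd x}}"
proof -
  have "0 \<in> {x::nat. even x} - {x. odd x}" "1 \<in> {x::nat. odd x}"
    by simp_all
  then have "{x::nat. even x} \<noteq> {}" "{x::nat. odd x} \<noteq> {}" "{x::nat. even x} \<noteq> {x. odd x}"
    by blast+
  moreover have "synchronizing_in noise_measure (bd_cocycle g1 g2) {x. even x}"
    "synchronizing_in noise_measure (bd_cocycle g1 g2) {x. odd x}"
    using assms by (auto intro!: bd_cocycle_synchronizing_in_parity_class)
  ultimately show ?thesis
    unfolding partially_synchronizing_def by auto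
qed

end
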